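(* Let $G$ be a group with identity $e$ and let $A$ be a finite set with $|A|\ge 2$. Let $S\subseteq G$ be a finite subset with $e\in S$ and $|S|\ge 2$, and let $\mu:A^S\to A$ be a local map, generated by the pair $(\mathcal P,f)$. Then: (1) If $|\mathcal P|\neq |A|^{|S|}-|A|^{|S|-1}$, then $e\in\mathrm{mms}(\mu)$. (2) If $|\mathcal P|$ is not a multiple of $|A|$, then $\mathrm{mms}(\mu)=S$. (3) If $|S|\ge 3$, $f$ is well-behaved and $|\mathcal P|=|A|$, then $\mathrm{mms}(\mu)=S$ or $\mathrm{mms}(\mu)=S\setminus\{s\}$ for some $s\in S\setminus\{e\}$.
   Context: For a finite $S\subseteq G$, $A^S$ denotes the set of all functions $S\to A$ (patterns), and $A^G$ the set of all functions $G\to A$ (configurations). The shift action of $G$ on $A^G$ is $(g\cdot x)(h)=x(g^{-1}h)$. A local map $\mu:A^S\to A$ defines the cellular automaton $\tau:A^G\to A^G$, $\tau(x)(g)=\mu((g^{-1}\cdot x)|_S)$ for all $x\in A^G$, $g\in G$. A finite set $T\subseteq G$ is a memory set of $\tau$ if some local map $A^T\to A$ defines $\tau$. The minimal memory set $\mathrm{mms}(\mu)$ is the intersection of all memory sets of the cellular automaton defined by $\mu$. The pair $(\mathcal P,f)$ generates $\mu$ if $\mathcal P=\{z\in A^S:\mu(z)\neq z(e)\}$ and $f:\mathcal P\to A$ is the restriction of $\mu$ to $\mathcal P$. The function $f$ is well-behaved if for all $p,q\in\mathcal P$: $p(e)=q(e)$ if and only if $f(p)=f(q)$. *)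

theory Defs
  imports "HOL-Library.FuncSet" "HOL-Library.Cardinality"
begin

(*The group G is a type of class group_add (written additively, not necessarily
commutative); its identity e is 0. The alphabet A is a finite type 'a.
Patterns in A^S are extensional functions in PiE S UNIV; a local map is a function on
patterns (only its values on PiE S UNIV matter). *)

definition shift :: "'g::group_add \<Rightarrow> ('g \<Rightarrow> 'a) \<Rightarrow> ('g \<Rightarrow> 'a)" where
  "shift g x = (\<lambda>h. x (- g + h))"

definition ca :: "'g::group_add set \<Rightarrow> (('g \<Rightarrow> 'a) \<Rightarrow> 'a) \<Rightarrow> ('g \<Rightarrow> 'a) \<Rightarrow> ('g \<Rightarrow> 'a)" where
  "ca S mu x = (\<lambda>g. mu (restrict (shift (- g) x) S))"

definition memory_set :: "(('g::group_add \<Rightarrow> 'a) \<Rightarrow> ('g \<Rightarrow> 'a)) \<Rightarrow> 'g set \<Rightarrow> bool" where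
  "memory_set tau T \<longleftrightarrow> finite T \<and> (\<exists>mu'. ca T mu' = tau)"

definition mms :: "'g::group_add set \<Rightarrow> (('g \<Rightarrow> 'a) \<Rightarrow> 'a) \<Rightarrow> 'g set" where
  "mms S mu = \<Inter> {T. memory_set (ca S mu) T}"

definition generates ::
  "('g::group_add \<Rightarrow> 'a) set \<Rightarrow> (('g \<Rightarrow> 'a) \<Rightarrow> 'a) \<Rightarrow> 'g set \<Rightarrow> (('g \<Rightarrow> 'a) \<Rightarrow> 'a) \<Rightarrow> bool" where
  "generates P f S mu \<longleftrightarrow>
     P = {z \<in> S \<rightarrow>\<^sub>E (UNIV :: 'a set). mu z \<noteq> z 0} \<and> (\<forall>p\<in>P. f p = mu p)"

definition well_behaved :: "('g::group_add \<Rightarrow> 'a) set \<Rightarrow> (('g \<Rightarrow> 'a) \<Rightarrow> 'a) \<Rightarrow> bool" where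
  "well_behaved P f \<longleftrightarrow> (\<forall>p\<in>P. \<forall>q\<in>P. p 0 = q 0 \<longleftrightarrow> f p = f q)"

end

theory Submission
  imports Defs
begin

text \<open>A cell s of the neighbourhood S lies in the minimal memory set as soon as the local map
  depends on s. The rest is counting the patterns \<open>P\<close> fibre by fibre along one cell s, i.e.
  over the patterns that agree off s. If \<mu> ignores the cell 0, every fibre contains exactly
  \<open>|A| - 1\<close> patterns of \<open>P\<close> (all letters but the constant value of \<mu>), so
  \<open>|P| = |A|^(|S|-1) (|A| - 1)\<close>. If \<mu> ignores a cell \<open>s \<noteq> 0\<close>, then membership
  in \<open>P\<close> is constant on each fibre, so \<open>|A|\<close> divides \<open>|P|\<close>. If \<mu> ignores two cells
  \<open>s \<noteq> t\<close> other than 0, every pattern of \<open>P\<close> gives \<open>|A|^2\<close> patterns of \<open>P\<close> by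
  varying it at s and t, so \<open>|P| \<ge> |A|^2 > |A|\<close>.\<close>

definition depends_on :: "'g set \<Rightarrow> (('g \<Rightarrow> 'a) \<Rightarrow> 'a) \<Rightarrow> 'g \<Rightarrow> bool" where
  "depends_on S mu s \<longleftrightarrow> (\<exists>z \<in> S \<rightarrow>\<^sub>E UNIV. \<exists>b. mu (z(s := b)) \<noteq> mu z)"

definition active_patterns :: "'g::group_add set \<Rightarrow> (('g \<Rightarrow> 'a) \<Rightarrow> 'a) \<Rightarrow> ('g \<Rightarrow> 'a) set" where
  "active_patterns S mu = {z \<in> S \<rightarrow>\<^sub>E UNIV. mu z \<noteq> z 0}"

lemma mu_upd_eq_if_not_depends_on:
  "\<not> depends_on S mu s \<Longrightarrow> z \<in> S \<rightarrow>\<^sub>E UNIV \<Longrightarrow> mu (z(s := b)) = mu z"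
  unfolding depends_on_def by blast

lemma PiE_UNIV_fun_upd: "z \<in> S \<rightarrow>\<^sub>E UNIV \<Longrightarrow> s \<in> S \<Longrightarrow> z(s := a) \<in> S \<rightarrow>\<^sub>E UNIV"
  by (metis PiE_fun_upd UNIV_I insert_absorb)

lemma PiE_UNIV_Diff_fun_upd: "w \<in> (S - {s}) \<rightarrow>\<^sub>E UNIV \<Longrightarrow> s \<in> S \<Longrightarrow> w(s := a) \<in> S \<rightarrow>\<^sub>E UNIV"
  by (metis PiE_fun_upd UNIV_I insert_Diff)

lemma mu_fibre_constant_if_not_depends_on:
  assumes "\<not> depends_on S mu s" and "s \<in> S" and "w \<in> (S - {s}) \<rightarrow>\<^sub>E UNIV"
  shows "mu (w(s := a)) = mu (w(s := b))"
  using mu_upd_eq_if_not_depends_on[OF assms(1) PiE_UNIV_Diff_fun_upd[OF assms(3,2)]]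
  by (metis fun_upd_upd)

lemma mms_subset: "finite S \<Longrightarrow> mms S mu \<subseteq> S"
  unfolding mms_def memory_set_def by blast

lemma shift_0 [simp]: "shift 0 x = x"
  by (simp add: shift_def)

lemma ca_at_0: "z \<in> S \<rightarrow>\<^sub>E UNIV \<Longrightarrow> ca S mu z 0 = mu z"
  by (simp add: ca_def restrict_PiE)

lemma depends_on_imp_in_mms:
  fixes S :: "'g::group_add set" and mu :: "('g \<Rightarrow> 'a) \<Rightarrow> 'a"
  assumes "s \<in> S" and "depends_on S mu s"
  shows "s \<in> mms S mu"
  unfolding mms_def
proof (rule InterI, clarify)
  fix T assume "memory_set (ca S mu) T"
  then obtain mu' where mu': "ca T mu' = ca S mu" unfolding memory_set_def by blast
  obtain z b where z: "z \<in> S \<rightarrow>\<^sub>E UNIV" and changes: "mu (z(s := b)) \<noteq> mu z"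
    using assms(2) unfolding depends_on_def by blast
  have z': "z(s := b) \<in> S \<rightarrow>\<^sub>E UNIV"
    using z assms(1) by (rule PiE_UNIV_fun_upd)
  show "s \<in> T"
  proof (rule ccontr)
    assume "s \<notin> T"
    then have "ca T mu' (z(s := b)) 0 = ca T mu' z 0"
      by (simp add: ca_def)
    then show False
      using changes by (simp add: mu' ca_at_0 z z')
  qed
qed

lemma mms_eq_if_depends_on_all:
  "finite S \<Longrightarrow> \<forall>s \<in> S. depends_on S mu s \<Longrightarrow> mms S mu = S"
  using mms_subset depends_on_imp_in_mms by blast

lemma mms_cases_if_depends_on_all_but:
  assumes "finite S" and "\<forall>t \<in> S - {s}. depends_on S mu t"
  shows "mms S mu = S \<or> mms S mu = S - {s}"
  using mms_subset[OF assms(1)] depends_on_imp_in_mms[where mu = mu] assms(2) by blast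

lemma card_eq_sum_card_fibres:
  fixes Q :: "('g \<Rightarrow> 'a::finite) set"
  assumes "finite S" and "s \<in> S" and "Q \<subseteq> S \<rightarrow>\<^sub>E UNIV"
  shows "card Q = (\<Sum>w \<in> (S - {s}) \<rightarrow>\<^sub>E UNIV. card {a. w(s := a) \<in> Q})"
proof -
  let ?W = "(S - {s}) \<rightarrow>\<^sub>E (UNIV :: 'a set)"
  let ?upd = "\<lambda>(w, a). w(s := a)"
  let ?fibres = "SIGMA w:?W. {a. w(s := a) \<in> Q}"
  have "inj_on ?upd ?fibres"
  proof (rule inj_onI, clarsimp)
    fix w a w' a'
    assume w: "w \<in> ?W" and w': "w' \<in> ?W" and eq: "w(s := a) = w'(s := a')"
    have "a = a'"
      using fun_cong[OF eq, of s] by simp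
    moreover have "w i = w' i" if "i \<in> S - {s}" for i
      using fun_cong[OF eq, of i] that by auto
    then have "w = w'"
      by (rule PiE_ext[OF w w'])
    ultimately show "w = w' \<and> a = a'" by simp
  qed
  moreover have "?upd ` ?fibres = Q"
  proof (intro equalityI subsetI)
    fix z assume "z \<in> Q"
    moreover have "z(s := undefined) \<in> ?W"
      using \<open>z \<in> Q\<close> assms(2,3) by (intro fun_upd_in_PiE) (auto simp: insert_absorb)
    ultimately show "z \<in> ?upd ` ?fibres"
      by (intro image_eqI[where x = "(z(s := undefined), z s)"]) auto
  qed auto
  ultimately have "card Q = card ?fibres"
    by (metis card_image)
  also have "\<dots> = (\<Sum>w \<in> ?W. card {a. w(s := a) \<in> Q})"
    using assms(1) by (intro card_SigmaI) (simp_all add: finite_PiE)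
  finally show ?thesis .
qed

lemma card_active_patterns_if_not_depends_on_0:
  fixes S :: "'g::group_add set" and mu :: "('g \<Rightarrow> 'a::finite) \<Rightarrow> 'a"
  assumes "finite S" and "0 \<in> S" and "\<not> depends_on S mu 0"
  shows "card (active_patterns S mu) = CARD('a) ^ (card S - 1) * (CARD('a) - 1)"
proof -
  let ?W = "(S - {0}) \<rightarrow>\<^sub>E (UNIV :: 'a set)"
  have "card (active_patterns S mu) = (\<Sum>w \<in> ?W. card {a. w(0 := a) \<in> active_patterns S mu})"
    using assms(1,2) by (intro card_eq_sum_card_fibres) (auto simp: active_patterns_def)
  also have "\<dots> = (\<Sum>w \<in> ?W. CARD('a) - 1)"
  proof (rule sum.cong[OF refl])
    fix w assume w: "w \<in> ?W"
    define c where "c = mu (w(0 := undefined))"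
    have const: "mu (w(0 := a)) = c" for a
      unfolding c_def by (rule mu_fibre_constant_if_not_depends_on[OF assms(3,2) w])
    have "{a. w(0 := a) \<in> active_patterns S mu} = UNIV - {c}"
      using PiE_UNIV_Diff_fun_upd[OF w assms(2)] by (auto simp: active_patterns_def const)
    then show "card {a. w(0 := a) \<in> active_patterns S mu} = CARD('a) - 1"
      by (simp add: card_Diff_singleton)
  qed
  also have "\<dots> = CARD('a) ^ (card S - 1) * (CARD('a) - 1)"
    using assms(1,2) by (simp add: card_funcsetE)
  finally show ?thesis .
qed

lemma dvd_card_active_patterns_if_not_depends_on:
  fixes S :: "'g::group_add set" and mu :: "('g \<Rightarrow> 'a::finite) \<Rightarrow> 'a"
  assumes "finite S" and "s \<in> S" and "s \<noteq> 0" and "\<not> depends_on S mu s"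
  shows "CARD('a) dvd card (active_patterns S mu)"
proof -
  let ?W = "(S - {s}) \<rightarrow>\<^sub>E (UNIV :: 'a set)"
  have "card (active_patterns S mu) = (\<Sum>w \<in> ?W. card {a. w(s := a) \<in> active_patterns S mu})"
    using assms(1,2) by (intro card_eq_sum_card_fibres) (auto simp: active_patterns_def)
  also have "CARD('a) dvd \<dots>"
  proof (rule dvd_sum)
    fix w assume w: "w \<in> ?W"
    define c where "c = mu (w(s := undefined))"
    have const: "mu (w(s := a)) = c" for a
      unfolding c_def by (rule mu_fibre_constant_if_not_depends_on[OF assms(4,2) w])
    have "{a. w(s := a) \<in> active_patterns S mu} = (if c \<noteq> w 0 then UNIV else {})"
      using PiE_UNIV_Diff_fun_upd[OF w assms(2)] assms(3) by (auto simp: active_patterns_def const)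
    then show "CARD('a) dvd card {a. w(s := a) \<in> active_patterns S mu}"
      by simp
  qed
  finally show ?thesis .
qed

lemma card_active_patterns_ge_if_not_depends_on_two:
  fixes S :: "'g::group_add set" and mu :: "('g \<Rightarrow> 'a::finite) \<Rightarrow> 'a"
  assumes "finite S" and "s \<in> S" and "t \<in> S" and "s \<noteq> 0" and "t \<noteq> 0" and "s \<noteq> t"
    and "\<not> depends_on S mu s" and "\<not> depends_on S mu t"
    and "p \<in> active_patterns S mu"
  shows "CARD('a) * CARD('a) \<le> card (active_patterns S mu)"
proof -
  let ?vary = "\<lambda>(a :: 'a, b :: 'a). p(s := a, t := b)"
  have p: "p \<in> S \<rightarrow>\<^sub>E UNIV" "mu p \<noteq> p 0"
    using assms(9) by (auto simp: active_patterns_def)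
  have "inj ?vary"
    using \<open>s \<noteq> t\<close> by (auto intro!: inj_onI simp: fun_eq_iff split: if_splits)
  then have "card (range ?vary) = CARD('a) * CARD('a)"
    by (simp add: card_image card_cartesian_product flip: UNIV_Times_UNIV)
  moreover have "range ?vary \<subseteq> active_patterns S mu"
  proof clarify
    fix a b
    have ps: "p(s := a) \<in> S \<rightarrow>\<^sub>E UNIV" and pst: "p(s := a, t := b) \<in> S \<rightarrow>\<^sub>E UNIV"
      using p(1) assms(2,3) by (simp_all add: PiE_UNIV_fun_upd)
    have "mu (p(s := a, t := b)) = mu p"
      using mu_upd_eq_if_not_depends_on[OF assms(8) ps] mu_upd_eq_if_not_depends_on[OF assms(7) p(1)]
      by simp
    then show "p(s := a, t := b) \<in> active_patterns S mu"
      using pst p(2) assms(4,5) by (simp add: active_patterns_def)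
  qed
  moreover have "finite (active_patterns S mu)"
    using assms(1) by (simp add: active_patterns_def finite_PiE)
  ultimately show ?thesis
    by (metis card_mono)
qed

lemma zero_in_mms_if_card_active_patterns_ne:
  fixes S :: "'g::group_add set" and mu :: "('g \<Rightarrow> 'a::finite) \<Rightarrow> 'a"
  assumes "finite S" and "0 \<in> S"
    and "card (active_patterns S mu) \<noteq> CARD('a) ^ card S - CARD('a) ^ (card S - 1)"
  shows "0 \<in> mms S mu"
proof (rule depends_on_imp_in_mms[OF assms(2)], rule ccontr)
  assume "\<not> depends_on S mu 0"
  moreover obtain k where "card S = Suc k"
    using assms(1,2) card_Suc_Diff1 by metis
  then have "CARD('a) ^ (card S - 1) * (CARD('a) - 1) = CARD('a) ^ card S - CARD('a) ^ (card S - 1)"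
    by (simp add: diff_mult_distrib2 mult.commute)
  ultimately show False
    using card_active_patterns_if_not_depends_on_0[OF assms(1,2), where mu = mu] assms(3) by simp
qed

lemma mms_eq_if_not_dvd_card_active_patterns:
  fixes S :: "'g::group_add set" and mu :: "('g \<Rightarrow> 'a::finite) \<Rightarrow> 'a"
  assumes "finite S" and "0 \<in> S" and "card S \<ge> 2"
    and "\<not> CARD('a) dvd card (active_patterns S mu)"
  shows "mms S mu = S"
proof (rule mms_eq_if_depends_on_all[OF assms(1)], rule ballI, rule ccontr)
  fix s assume "s \<in> S" and "\<not> depends_on S mu s"
  then show False
  proof (cases "s = 0")
    case True
    have "CARD('a) dvd CARD('a) ^ (card S - 1) * (CARD('a) - 1)"
      using assms(3) by simp
    then show False
      using True \<open>\<not> depends_on S mu s\<close> assms(4)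
        card_active_patterns_if_not_depends_on_0[OF assms(1,2), where mu = mu]
      by simp
  qed (use dvd_card_active_patterns_if_not_depends_on[OF assms(1), where mu = mu] assms(4) in blast)
qed

lemma mms_cases_if_card_active_patterns_eq_card:
  fixes S :: "'g::group_add set" and mu :: "('g \<Rightarrow> 'a::finite) \<Rightarrow> 'a"
  assumes "CARD('a) \<ge> 2" and "finite S" and "0 \<in> S" and "card S \<ge> 3"
    and card_active: "card (active_patterns S mu) = CARD('a)"
  shows "mms S mu = S \<or> (\<exists>s \<in> S - {0}. mms S mu = S - {s})"
proof -
  have "CARD('a) < CARD('a) * CARD('a)"
    using assms(1) by simp
  also have "\<dots> \<le> CARD('a) ^ (card S - 1)"
    using assms(1,4) power_increasing[of 2 "card S - 1" "CARD('a)"] by (simp add: power2_eq_square)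
  also have "\<dots> \<le> CARD('a) ^ (card S - 1) * (CARD('a) - 1)"
    using assms(1) by simp
  finally have "card (active_patterns S mu) \<noteq> CARD('a) ^ (card S - 1) * (CARD('a) - 1)"
    using card_active by simp
  then have "depends_on S mu 0"
    using card_active_patterns_if_not_depends_on_0[OF assms(2,3), where mu = mu] by blast
  show ?thesis
  proof (cases "\<forall>s \<in> S. depends_on S mu s")
    case True
    then show ?thesis using mms_eq_if_depends_on_all[OF assms(2)] by blast
  next
    case False
    then obtain s where s: "s \<in> S" "\<not> depends_on S mu s" by blast
    with \<open>depends_on S mu 0\<close> have "s \<noteq> 0" by blast
    obtain p where "p \<in> active_patterns S mu"
      using card_active assms(1) by fastforce
    have "\<forall>t \<in> S - {s}. depends_on S mu t"
    proof (rule ballI, rule ccontr)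
      fix t assume "t \<in> S - {s}" and "\<not> depends_on S mu t"
      with \<open>depends_on S mu 0\<close> have "t \<noteq> 0" by blast
      have "CARD('a) * CARD('a) \<le> CARD('a)"
        using card_active_patterns_ge_if_not_depends_on_two[OF assms(2) s(1) _ \<open>s \<noteq> 0\<close> \<open>t \<noteq> 0\<close>
            _ s(2) \<open>\<not> depends_on S mu t\<close> \<open>p \<in> active_patterns S mu\<close>] \<open>t \<in> S - {s}\<close> card_active
        by auto
      then show False using assms(1) by simp
    qed
    then show ?thesis
      using mms_cases_if_depends_on_all_but[OF assms(2)] s(1) \<open>s \<noteq> 0\<close> by blast
  qed
qed

lemma generates_imp_eq_active_patterns: "generates P f S mu \<Longrightarrow> P = active_patterns S mu"
  by (simp add: generates_def active_patterns_def)

theorem theorem1: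
  fixes S :: "'g::group_add set"
    and mu :: "('g \<Rightarrow> 'a::finite) \<Rightarrow> 'a"
    and P :: "('g \<Rightarrow> 'a) set"
    and f :: "('g \<Rightarrow> 'a) \<Rightarrow> 'a"
  assumes "CARD('a) \<ge> 2"
    and "finite S" and "0 \<in> S" and "card S \<ge> 2"
    and "generates P f S mu"
  shows "(card P \<noteq> CARD('a) ^ card S - CARD('a) ^ (card S - 1) \<longrightarrow> 0 \<in> mms S mu)
    \<and> (\<not> CARD('a) dvd card P \<longrightarrow> mms S mu = S)
    \<and> (card S \<ge> 3 \<and> well_behaved P f \<and> card P = CARD('a) \<longrightarrow>
         mms S mu = S \<or> (\<exists>s \<in> S - {0}. mms S mu = S - {s}))"
  using zero_in_mms_if_card_active_patterns_ne[OF assms(2,3)]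
    mms_eq_if_not_dvd_card_active_patterns[OF assms(2,3,4)]
    mms_cases_if_card_active_patterns_eq_card[OF assms(1,2,3)]
    generates_imp_eq_active_patterns[OF assms(5)]
  by blast

end
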